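(* Let $T\in\mathbb{R}^{n\times n}$ be skew-symmetric, $S\in\mathbb{R}^{k\times k}$ skew-symmetric and $\Lambda\in\mathbb{R}^{k\times k}$ symmetric, all fixed. For $U\in\mathbb{R}^{n\times k}_{\ge 0}$ put $Q=T^{\top}US$, $P=S^{\top}U^{\top}US$ and $$F(U)=\mathrm{tr}\big(-2U^{\top}T^{\top}US+US^{\top}U^{\top}USU^{\top}+U\Lambda U^{\top}\big).$$ Assume $P_{+}+\Lambda\ge 0$ entrywise. For $U\ge 0$ and $U'$ with strictly positive entries define $$Z(U,U')=\mathrm{tr}\big(-2Q_{+}U^{\top}-UP_{-}U^{\top}\big)+\sum_{i,j}\left(\frac{[U'(P_{+}+\Lambda)]_{ij}U_{ij}^2}{U'_{ij}}+2[Q_{-}]_{ij}\frac{U_{ij}^2+U_{ij}'^2}{2U'_{ij}}\right),$$ with $Q,P$ computed from $U$. Then $Z$ is an auxiliary function of $F$, i.e. $Z(U,U')\ge F(U)$ for all such $U,U'$, and $Z(U,U)=F(U)$.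
   Context: For a real matrix $X$, $X_{+}$ and $X_{-}$ denote its positive and negative parts: $X_{+}=\max(X,0)$, $X_{-}=\max(-X,0)$ entrywise, so $X=X_{+}-X_{-}$ with $X_{\pm}\ge 0$. *)

theory Defs
  imports "HOL-Analysis.Analysis"
begin

definition pos_part_mat :: "real^'c^'r \<Rightarrow> real^'c^'r" where
  "pos_part_mat X = (\<chi> i j. max (X$i$j) 0)"

definition neg_part_mat :: "real^'c^'r \<Rightarrow> real^'c^'r" where
  "neg_part_mat X = (\<chi> i j. max (- (X$i$j)) 0)"

definition nonneg_mat :: "real^'c^'r \<Rightarrow> bool" where
  "nonneg_mat X \<longleftrightarrow> (\<forall>i j. X$i$j \<ge> 0)"

definition pos_mat :: "real^'c^'r \<Rightarrow> bool" where
  "pos_mat X \<longleftrightarrow> (\<forall>i j. X$i$j > 0)"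

definition Qm :: "real^'n^'n \<Rightarrow> real^'k^'k \<Rightarrow> real^'k^'n \<Rightarrow> real^'k^'n" where
  "Qm T S U = transpose T ** U ** S"

definition Pm :: "real^'k^'k \<Rightarrow> real^'k^'n \<Rightarrow> real^'k^'k" where
  "Pm S U = transpose S ** transpose U ** U ** S"

definition Fobj :: "real^'n^'n \<Rightarrow> real^'k^'k \<Rightarrow> real^'k^'k \<Rightarrow> real^'k^'n \<Rightarrow> real" where
  "Fobj T S \<Lambda> U = - 2 * trace (transpose U ** transpose T ** U ** S)
      + trace (U ** transpose S ** transpose U ** U ** S ** transpose U)
      + trace (U ** \<Lambda> ** transpose U)"

definition Zaux :: "real^'n^'n \<Rightarrow> real^'k^'k \<Rightarrow> real^'k^'k \<Rightarrow> real^'k^'n \<Rightarrow> real^'k^'n \<Rightarrow> real" where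
  "Zaux T S \<Lambda> U U' =
    (let Q = Qm T S U; P = Pm S U;
         M = U' ** (pos_part_mat P + \<Lambda>) in
     (- 2 * trace (pos_part_mat Q ** transpose U) - trace (U ** neg_part_mat P ** transpose U))
     + (\<Sum>i\<in>UNIV. \<Sum>j\<in>UNIV.
          M$i$j * (U$i$j)^2 / U'$i$j
          + 2 * (neg_part_mat Q)$i$j * ((U$i$j)^2 + (U'$i$j)^2) / (2 * U'$i$j)))"

end

theory Submission
  imports Defs
begin

text \<open>Split \<open>Q\<close> and \<open>P\<close> into positive and negative parts. The terms
\<open>-2 tr(Q\<^sub>+ U\<^sup>T)\<close> and \<open>-tr(U P\<^sub>- U\<^sup>T)\<close> occur in both \<open>F\<close> and \<open>Z\<close>; the two remaining
terms of \<open>F\<close> are bounded separately. By AM-GM, \<open>2 U\<^sub>i\<^sub>j \<le> (U\<^sub>i\<^sub>j\<^sup>2 + U'\<^sub>i\<^sub>j\<^sup>2) / U'\<^sub>i\<^sub>j\<close>,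
which handles \<open>2 tr(Q\<^sub>- U\<^sup>T)\<close>. For the symmetric nonnegative matrix \<open>A = P\<^sub>+ + \<Lambda>\<close>, each row
\<open>u\<close> of \<open>U\<close> and the corresponding row \<open>v\<close> of \<open>U'\<close> satisfy
\<open>\<Sum>\<^sub>b (v A)\<^sub>b u\<^sub>b\<^sup>2 / v\<^sub>b - u A u\<^sup>T = 1/2 \<Sum>\<^sub>a\<^sub>b A\<^sub>a\<^sub>b (v\<^sub>a u\<^sub>b - v\<^sub>b u\<^sub>a)\<^sup>2 / (v\<^sub>a v\<^sub>b) \<ge> 0\<close>.
Both bounds are equalities for \<open>U' = U\<close>.\<close>

lemma matrix_add_rdistrib: "(A + B) ** C = A ** C + B ** C"
  by (vector matrix_matrix_mult_def sum.distrib[symmetric] field_simps)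

lemma trace_mult_transpose:
  fixes X Y :: "'a::comm_semiring_1^'c^'r"
  shows "trace (X ** transpose Y) = (\<Sum>i\<in>UNIV. \<Sum>j\<in>UNIV. X$i$j * Y$i$j)"
  unfolding trace_def matrix_matrix_mult_def transpose_def by simp

lemma pos_part_mat_eq_add_neg_part: "pos_part_mat X = X + neg_part_mat X"
  unfolding pos_part_mat_def neg_part_mat_def by (simp add: vec_eq_iff max_def)

lemma neg_part_mat_nonneg: "nonneg_mat (neg_part_mat X)"
  unfolding nonneg_mat_def neg_part_mat_def by simp

lemma transpose_add: "transpose (A + B) = transpose A + transpose B"
  by (simp add: transpose_def vec_eq_iff)

lemma transpose_pos_part_mat: "transpose (pos_part_mat X) = pos_part_mat (transpose X)"
  unfolding pos_part_mat_def transpose_def by simp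

lemma transpose_Pm: "transpose (Pm S U) = Pm S U"
  unfolding Pm_def by (simp add: matrix_transpose_mul matrix_mul_assoc)

lemma quadratic_form_le_weighted_sum:
  fixes u v :: "'a \<Rightarrow> real"
  assumes v_pos: "\<And>a. a \<in> K \<Longrightarrow> v a > 0"
    and A_sym: "\<And>a b. A a b = A b a" and A_nonneg: "\<And>a b. A a b \<ge> 0"
  shows "(\<Sum>b\<in>K. (\<Sum>a\<in>K. u a * A a b) * u b)
         \<le> (\<Sum>b\<in>K. (\<Sum>a\<in>K. v a * A a b) * (u b)^2 / v b)"
proof -
  define L where "L = (\<Sum>a\<in>K. \<Sum>b\<in>K. A a b * (u a * u b))"
  define W where "W = (\<Sum>a\<in>K. \<Sum>b\<in>K. A a b * (v a * (u b)^2 / v b))"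
  have L_eq: "(\<Sum>b\<in>K. (\<Sum>a\<in>K. u a * A a b) * u b) = L"
    unfolding L_def sum_distrib_right by (subst sum.swap) (simp add: mult_ac)
  have W_eq: "(\<Sum>b\<in>K. (\<Sum>a\<in>K. v a * A a b) * (u b)^2 / v b) = W"
    unfolding W_def sum_distrib_right sum_divide_distrib
    by (subst sum.swap) (simp add: mult_ac)
  have W_swap: "W = (\<Sum>a\<in>K. \<Sum>b\<in>K. A a b * (v b * (u a)^2 / v a))"
    unfolding W_def by (subst sum.swap) (simp add: A_sym mult_ac)
  have "(\<Sum>a\<in>K. \<Sum>b\<in>K. A a b * (v a * (u b)^2 / v b + v b * (u a)^2 / v a - 2 * (u a * u b)))
      = W + W - 2 * L"
    unfolding distrib_left right_diff_distrib sum.distrib sum_subtractf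
    by (subst (2) W_swap) (simp add: W_def L_def sum_distrib_left mult_ac)
  moreover have "(\<Sum>a\<in>K. \<Sum>b\<in>K. A a b * (v a * (u b)^2 / v b + v b * (u a)^2 / v a - 2 * (u a * u b))) \<ge> 0"
  proof (intro sum_nonneg mult_nonneg_nonneg A_nonneg)
    fix a b assume "a \<in> K" "b \<in> K"
    then have va: "v a > 0" and vb: "v b > 0" using v_pos by auto
    have "v a * (u b)^2 / v b + v b * (u a)^2 / v a - 2 * (u a * u b)
        = (v a * u b - v b * u a)^2 / (v a * v b)"
      using va vb by (simp add: field_simps power2_eq_square)
    then show "0 \<le> v a * (u b)^2 / v b + v b * (u a)^2 / v a - 2 * (u a * u b)"
      using va vb by simp
  qed
  ultimately show ?thesis unfolding W_eq L_eq by simp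
qed

lemma trace_quadratic_le_weighted_sum:
  fixes U V :: "real^'k^'n" and A :: "real^'k^'k"
  assumes V_pos: "pos_mat V" and A_sym: "transpose A = A" and A_nonneg: "nonneg_mat A"
  shows "trace (U ** A ** transpose U) \<le> (\<Sum>i\<in>UNIV. \<Sum>j\<in>UNIV. (V ** A)$i$j * (U$i$j)^2 / V$i$j)"
  unfolding trace_mult_transpose
proof (rule sum_mono)
  fix i
  have "A$a$b = A$b$a" for a b
    using arg_cong[OF A_sym, of "\<lambda>M. M$b$a"] by (simp add: transpose_def)
  then show "(\<Sum>j\<in>UNIV. (U ** A)$i$j * U$i$j) \<le> (\<Sum>j\<in>UNIV. (V ** A)$i$j * (U$i$j)^2 / V$i$j)"
    unfolding matrix_matrix_mult_def
    using quadratic_form_le_weighted_sum[of UNIV "\<lambda>j. V$i$j" "\<lambda>a b. A$a$b" "\<lambda>j. U$i$j"]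
      V_pos A_nonneg
    by (simp add: pos_mat_def nonneg_mat_def)
qed

lemma trace_quadratic_eq_weighted_sum:
  fixes U :: "real^'k^'n" and A :: "real^'k^'k"
  assumes "pos_mat U"
  shows "(\<Sum>i\<in>UNIV. \<Sum>j\<in>UNIV. (U ** A)$i$j * (U$i$j)^2 / U$i$j) = trace (U ** A ** transpose U)"
  unfolding trace_mult_transpose
  using assms by (intro sum.cong refl) (simp add: pos_mat_def power2_eq_square)

lemma trace_le_half_sum_squares:
  fixes N U V :: "real^'k^'n"
  assumes N_nonneg: "nonneg_mat N" and V_pos: "pos_mat V"
  shows "2 * trace (N ** transpose U)
         \<le> (\<Sum>i\<in>UNIV. \<Sum>j\<in>UNIV. 2 * N$i$j * ((U$i$j)^2 + (V$i$j)^2) / (2 * V$i$j))"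
  unfolding trace_mult_transpose sum_distrib_left
proof (intro sum_mono)
  fix i j
  have V_ij: "V$i$j > 0" and N_ij: "N$i$j \<ge> 0"
    using V_pos N_nonneg by (auto simp: pos_mat_def nonneg_mat_def)
  have "2 * V$i$j * U$i$j \<le> (U$i$j)^2 + (V$i$j)^2"
    using sum_squares_bound[of "U$i$j" "V$i$j"] by (simp add: power2_eq_square algebra_simps)
  then have "U$i$j \<le> ((U$i$j)^2 + (V$i$j)^2) / (2 * V$i$j)"
    using V_ij by (simp add: field_simps)
  then have "N$i$j * U$i$j \<le> N$i$j * (((U$i$j)^2 + (V$i$j)^2) / (2 * V$i$j))"
    using N_ij by (rule mult_left_mono)
  then show "2 * (N$i$j * U$i$j) \<le> 2 * N$i$j * ((U$i$j)^2 + (V$i$j)^2) / (2 * V$i$j)"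
    by simp
qed

lemma trace_eq_half_sum_squares:
  fixes N U :: "real^'k^'n"
  assumes "pos_mat U"
  shows "(\<Sum>i\<in>UNIV. \<Sum>j\<in>UNIV. 2 * N$i$j * ((U$i$j)^2 + (U$i$j)^2) / (2 * U$i$j))
         = 2 * trace (N ** transpose U)"
  unfolding trace_mult_transpose sum_distrib_left
  using assms by (intro sum.cong refl) (simp add: pos_mat_def power2_eq_square)

lemma Fobj_eq_traces:
  "Fobj T S \<Lambda> U = - 2 * trace (Qm T S U ** transpose U) + trace (U ** Pm S U ** transpose U)
     + trace (U ** \<Lambda> ** transpose U)"
proof -
  have "transpose U ** transpose T ** U ** S = transpose U ** Qm T S U"
    unfolding Qm_def by (simp add: matrix_mul_assoc)
  then have "trace (transpose U ** transpose T ** U ** S) = trace (Qm T S U ** transpose U)"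
    by (metis trace_mul_sym)
  moreover have "U ** transpose S ** transpose U ** U ** S ** transpose U = U ** Pm S U ** transpose U"
    unfolding Pm_def by (simp add: matrix_mul_assoc)
  ultimately show ?thesis
    unfolding Fobj_def by simp
qed

lemma Fobj_eq_pos_neg_parts:
  "Fobj T S \<Lambda> U =
     - 2 * trace (pos_part_mat (Qm T S U) ** transpose U) + 2 * trace (neg_part_mat (Qm T S U) ** transpose U)
     + trace (U ** (pos_part_mat (Pm S U) + \<Lambda>) ** transpose U)
     - trace (U ** neg_part_mat (Pm S U) ** transpose U)"
  unfolding Fobj_eq_traces pos_part_mat_eq_add_neg_part[of "Qm T S U"] pos_part_mat_eq_add_neg_part[of "Pm S U"]
  by (simp add: matrix_add_ldistrib matrix_add_rdistrib trace_add)

lemma Zaux_eq: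
  "Zaux T S \<Lambda> U V =
     - 2 * trace (pos_part_mat (Qm T S U) ** transpose U) - trace (U ** neg_part_mat (Pm S U) ** transpose U)
     + (\<Sum>i\<in>UNIV. \<Sum>j\<in>UNIV. (V ** (pos_part_mat (Pm S U) + \<Lambda>))$i$j * (U$i$j)^2 / V$i$j)
     + (\<Sum>i\<in>UNIV. \<Sum>j\<in>UNIV. 2 * (neg_part_mat (Qm T S U))$i$j * ((U$i$j)^2 + (V$i$j)^2) / (2 * V$i$j))"
  unfolding Zaux_def Let_def by (simp add: sum.distrib)

lemma Fobj_le_Zaux:
  assumes "transpose \<Lambda> = \<Lambda>" and "pos_mat V" and "nonneg_mat (pos_part_mat (Pm S U) + \<Lambda>)"
  shows "Fobj T S \<Lambda> U \<le> Zaux T S \<Lambda> U V"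
proof -
  have "transpose (pos_part_mat (Pm S U) + \<Lambda>) = pos_part_mat (Pm S U) + \<Lambda>"
    using assms(1) by (simp add: transpose_add transpose_pos_part_mat transpose_Pm)
  then show ?thesis
    unfolding Fobj_eq_pos_neg_parts Zaux_eq
    using trace_quadratic_le_weighted_sum[OF assms(2) _ assms(3), of U]
      trace_le_half_sum_squares[OF neg_part_mat_nonneg assms(2), of "Qm T S U" U]
    by linarith
qed

lemma Zaux_self_eq_Fobj:
  assumes "pos_mat U"
  shows "Zaux T S \<Lambda> U U = Fobj T S \<Lambda> U"
  unfolding Fobj_eq_pos_neg_parts Zaux_eq
    trace_quadratic_eq_weighted_sum[OF assms] trace_eq_half_sum_squares[OF assms]
  by simp

theorem lemma3:
  fixes T :: "real^'n^'n" and S \<Lambda> :: "real^'k^'k"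
  assumes "transpose T = - T" and "transpose S = - S" and "transpose \<Lambda> = \<Lambda>"
  shows "(\<forall>U U'. nonneg_mat U \<longrightarrow> pos_mat U'
            \<longrightarrow> nonneg_mat (pos_part_mat (Pm S U) + \<Lambda>)
            \<longrightarrow> Zaux T S \<Lambda> U U' \<ge> Fobj T S \<Lambda> U)
       \<and> (\<forall>U. pos_mat U \<longrightarrow> nonneg_mat (pos_part_mat (Pm S U) + \<Lambda>)
            \<longrightarrow> Zaux T S \<Lambda> U U = Fobj T S \<Lambda> U)"
  using Fobj_le_Zaux[OF assms(3)] Zaux_self_eq_Fobj by blast

end
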